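(* Let $n\ge 1$ and let $\mathbb{P}$ be a triangle-free graph on the vertex set $[n]$. Then: (i) $\mathrm{ex}_{\mathbb{P}}(n,K_3)\le \dfrac{n\,\alpha(\mathbb{P})}{2}$. (ii) If $e(\mathbb{P})+\mathrm{N}(S_2,\mathbb{P})<\lfloor n^2/4\rfloor$, then \[ \mathrm{ex}_{\mathbb{P}}(n,K_3)\ \ge\ \Big(\lfloor n^2/4\rfloor - e(\mathbb{P})-\mathrm{N}(S_2,\mathbb{P})\Big)\cdot \psi\big(\gamma(\mathbb{P})\, d(\mathbb{P})\big). \]
   Context: Graphs are identified with their edge sets; $e(G)$ is the number of edges. For a triangle-free graph $\mathbb{P}$ on $[n]$, $\mathrm{ex}_{\mathbb{P}}(n,K_3)$ denotes the maximum of $e(G)$ over all triangle-free graphs $G$ on $[n]$ with $\mathbb{P}\subseteq G$. $\alpha(\mathbb{P})$ is the independence number, $d(\mathbb{P})=2e(\mathbb{P})/n$ is the average degree, and $\mathrm{N}(S_2,\mathbb{P})=\sum_{v}\binom{d_{\mathbb{P}}(v)}{2}$ is the number of copies of the two-edge path (star with two edges) in $\mathbb{P}$. When $e(\mathbb{P})+\mathrm{N}(S_2,\mathbb{P})<\lfloor n^2/4\rfloor$, define $\gamma(\mathbb{P})=\dfrac{n(n-2)}{\lfloor n^2/4\rfloor-e(\mathbb{P})-\mathrm{N}(S_2,\mathbb{P})}$. The function $\psi:[0,\infty)\to(0,1]$ is defined by $\psi(d)=\dfrac{d\ln d-d+1}{(d-1)^2}$ for $d\notin\{0,1\}$, $\psi(0)=1$,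 $\psi(1)=1/2$ (it is continuous and decreasing). *)

theory Defs
  imports "HOL-Analysis.Analysis"
begin

text \<open>Graphs on the vertex set [n] = {1..n} are identified with their edge sets;
an edge is a 2-element set of vertices.\<close>

definition graph_on :: "nat \<Rightarrow> nat set set \<Rightarrow> bool" where
  "graph_on n G \<longleftrightarrow> (\<forall>e\<in>G. \<exists>u v. e = {u, v} \<and> u \<noteq> v \<and> u \<in> {1..n} \<and> v \<in> {1..n})"

definition triangle_free :: "nat set set \<Rightarrow> bool" where
  "triangle_free G \<longleftrightarrow> \<not> (\<exists>a b c. {a, b} \<in> G \<and> {b, c} \<in> G \<and> {a, c} \<in> G)"

definition num_edges :: "nat set set \<Rightarrow> nat" where
  "num_edges G = card G"

definition ex_P_K3 :: "nat \<Rightarrow> nat set set \<Rightarrow> nat" where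
  "ex_P_K3 n P = Max {num_edges G | G. graph_on n G \<and> triangle_free G \<and> P \<subseteq> G}"

definition independent_set :: "nat \<Rightarrow> nat set set \<Rightarrow> nat set \<Rightarrow> bool" where
  "independent_set n G S \<longleftrightarrow> S \<subseteq> {1..n} \<and> (\<forall>u\<in>S. \<forall>v\<in>S. {u, v} \<notin> G)"

definition indep_num :: "nat \<Rightarrow> nat set set \<Rightarrow> nat" where
  "indep_num n G = Max {card S | S. independent_set n G S}"

definition degree :: "nat set set \<Rightarrow> nat \<Rightarrow> nat" where
  "degree G v = card {u. {u, v} \<in> G}"

definition avg_degree :: "nat \<Rightarrow> nat set set \<Rightarrow> real" where
  "avg_degree n G = 2 * real (num_edges G) / real n"

definition num_S2 :: "nat \<Rightarrow> nat set set \<Rightarrow> nat" where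
  "num_S2 n G = (\<Sum>v\<in>{1..n}. degree G v choose 2)"

definition gamma_P :: "nat \<Rightarrow> nat set set \<Rightarrow> real" where
  "gamma_P n G = real n * (real n - 2) /
     (real ((n^2) div 4) - real (num_edges G) - real (num_S2 n G))"

definition psi :: "real \<Rightarrow> real" where
  "psi d = (if d = 0 then 1 else if d = 1 then 1/2
            else (d * ln d - d + 1) / (d - 1)^2)"

end

theory Submission
  imports Defs
begin

text \<open>
  (i) In a triangle-free G containing P every neighbourhood is independent in G, hence in P,
  so 2 e(G) = sum of the degrees <= n alpha(P).

  (ii) Split [n] into halves L = [1..n div 2] and R. Call a pair (a, b) in L x R a candidate if
  ab is neither an edge of P nor the end pair of a two-edge path of P; there are at least
  floor(n^2/4) - e(P) - N(S_2, P) candidates. Two candidates conflict if they share an endpoint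
  and their other endpoints are adjacent in P. Any conflict-free set of candidates can be added
  to P without creating a triangle, and the conflict graph is triangle-free with at most
  2 e(P) (n - 2) arcs. Shearer's bound (a triangle-free graph on N vertices with average
  degree D has an independent set of size N psi(D)) and the monotonicity of psi give (ii).
  Shearer's bound is proved by his induction, deleting the closed neighbourhood of a suitably
  chosen vertex; it uses that psi(x) is the integral of (1 - t) / (1 - t + t x) over [0, 1],
  hence convex, and solves x (x - 1) psi'(x) = 1 - (x + 1) psi(x).
\<close>

section \<open>The function psi\<close>

lemma psi_denominator_pos:
  fixes x t :: real
  assumes "0 < x" "t \<in> {0..1}"
  shows "0 < 1 - t + t * x"
  using assms by (cases "t = 1") (auto intro: add_pos_nonneg)

lemma has_integral_psi_generic:
  fixes x :: real
  assumes "0 < x" "x \<noteq> 1"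
  shows "((\<lambda>t. (1 - t) / (1 - t + t * x)) has_integral psi x) {0..1}"
proof -
  define c where "c = x - 1"
  have x: "x = c + 1" and "c \<noteq> 0" using assms by (simp_all add: c_def)
  define F where "F = (\<lambda>t. (c + 1) / c^2 * ln (1 + c * t) - t / c)"
  have "((\<lambda>t. (1 - t) / (1 - t + t * x)) has_integral F 1 - F 0) {0..1}"
  proof (rule fundamental_theorem_of_calculus)
    fix t :: real assume t: "t \<in> {0..1}"
    have den: "1 - t + t * x = 1 + c * t" by (simp add: x algebra_simps)
    have pos: "0 < 1 + c * t"
      using psi_denominator_pos[OF assms(1) t] by (simp add: den)
    have "(F has_real_derivative (1 - t) / (1 + c * t)) (at t within {0..1})"
      unfolding F_def
      by (insert pos \<open>c \<noteq> 0\<close>, (rule derivative_eq_intros refl | simp)+)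
        (simp add: divide_simps power2_eq_square, simp add: algebra_simps)
    then show "(F has_vector_derivative (1 - t) / (1 - t + t * x)) (at t within {0..1})"
      by (simp add: den has_real_derivative_iff_has_vector_derivative)
  qed simp
  moreover have "F 1 - F 0 = psi x"
    using assms \<open>c \<noteq> 0\<close> by (simp add: F_def psi_def x field_simps power2_eq_square)
  ultimately show ?thesis by simp
qed

lemma has_integral_psi:
  fixes x :: real
  assumes "0 \<le> x"
  shows "((\<lambda>t. (1 - t) / (1 - t + t * x)) has_integral psi x) {0..1}"
proof -
  consider "x = 0" | "x = 1" | "0 < x" "x \<noteq> 1"
    using assms by linarith
  then show ?thesis
  proof cases
    case 1
    have one: "((\<lambda>t. 1) has_integral (1::real)) {0..(1::real)}"
      using has_integral_const_real[of "1::real" 0 1] by simp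
    have "psi x = 1" by (simp add: 1 psi_def)
    then show ?thesis
      using has_integral_spike_finite[where S = "{1}", OF _ _ one] by (auto simp: 1)
  next
    case 2
    have "((\<lambda>t. 1 - t) has_integral (1 - 1^2/2) - (0 - 0^2/2)) {0..(1::real)}"
      by (rule fundamental_theorem_of_calculus)
        (auto intro!: derivative_eq_intros simp flip: has_real_derivative_iff_has_vector_derivative)
    then show ?thesis by (simp add: 2 psi_def)
  next
    case 3
    then show ?thesis by (rule has_integral_psi_generic)
  qed
qed

text \<open>This is psi'(x), by differentiation under the integral sign. Only its role as the slope of a
  supporting line (psi_tangent_le) and in the differential equation (psi_ode) is needed, so that
  fact is never proved.\<close>

definition psi_slope :: "real \<Rightarrow> real" where
  "psi_slope x = - integral {0..1} (\<lambda>t. t * (1 - t) / (1 - t + t * x)^2)"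

lemma has_integral_psi_slope:
  assumes "0 < x"
  shows "((\<lambda>t. t * (1 - t) / (1 - t + t * x)^2) has_integral - psi_slope x) {0..1}"
proof -
  have "continuous_on {0..1} (\<lambda>t. t * (1 - t) / (1 - t + t * x)^2)"
    using psi_denominator_pos[OF assms] by (intro continuous_intros) force
  then show ?thesis
    unfolding psi_slope_def minus_minus by (intro integrable_integral integrable_continuous_real)
qed

lemma psi_slope_nonpos: "0 < x \<Longrightarrow> psi_slope x \<le> 0"
  using has_integral_nonneg[OF has_integral_psi_slope] by fastforce

lemma psi_tangent_le:
  assumes "0 < x" "0 \<le> y"
  shows "psi x + (y - x) * psi_slope x \<le> psi y"
proof -
  have "((\<lambda>t. (1 - t) / (1 - t + t * y) - (1 - t) / (1 - t + t * x)
              + (y - x) * (t * (1 - t) / (1 - t + t * x)^2))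
         has_integral psi y - psi x + (y - x) * - psi_slope x) {0..1}"
    using assms by (intro has_integral_add has_integral_diff has_integral_mult_right
        has_integral_psi has_integral_psi_slope) auto
  moreover have "0 \<le> (1 - t) / (1 - t + t * y) - (1 - t) / (1 - t + t * x)
                     + (y - x) * (t * (1 - t) / (1 - t + t * x)^2)"
    if t: "t \<in> {0..1}" for t
  proof (cases "t = 1")
    case False
    define a b where "a = 1 - t + t * x" and "b = 1 - t + t * y"
    have "0 < a" using psi_denominator_pos[OF assms(1) t] by (simp add: a_def)
    have "0 < b" using t False assms(2) by (auto simp: b_def intro: add_pos_nonneg)
    have "(1 - t) / b - (1 - t) / a + (y - x) * (t * (1 - t) / a^2)
          = (1 - t) / b - (1 - t) / a + (b - a) * (1 - t) / a^2"
      by (simp add: a_def b_def algebra_simps)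
    also have "\<dots> = (1 - t) * (a - b)^2 / (a^2 * b)"
      using \<open>0 < a\<close> \<open>0 < b\<close> by (simp add: field_simps power2_eq_square)
    also have "\<dots> \<ge> 0"
      using t \<open>0 < b\<close> by simp
    finally show ?thesis by (simp add: a_def b_def)
  qed simp
  ultimately have "0 \<le> psi y - psi x + (y - x) * - psi_slope x"
    by (rule has_integral_nonneg)
  then show ?thesis by simp
qed

lemma psi_antimono:
  assumes "0 \<le> y" "y \<le> x"
  shows "psi x \<le> psi y"
proof (cases "x = y")
  case False
  then have "0 < x" using assms by simp
  then have "0 \<le> (y - x) * psi_slope x"
    using psi_slope_nonpos assms(2) by (simp add: mult_nonpos_nonpos)
  then show ?thesis using psi_tangent_le[OF \<open>0 < x\<close> assms(1)] by linarith
qed simp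

lemma psi_nonneg: "0 \<le> x \<Longrightarrow> 0 \<le> psi x"
  using has_integral_nonneg[OF has_integral_psi] by (simp add: divide_nonneg_nonneg)

lemma psi_ode:
  assumes "0 < x"
  shows "(x + 1) * psi x = 1 + (x - x^2) * psi_slope x"
proof -
  define H where "H = (\<lambda>t. x * t * (1 - t) / (1 - t + t * x))"
  have "((\<lambda>t. (x + 1) * ((1 - t) / (1 - t + t * x)) - 1
              + (x - x^2) * (t * (1 - t) / (1 - t + t * x)^2))
         has_integral H 1 - H 0) {0..1}"
  proof (rule fundamental_theorem_of_calculus)
    fix t :: real assume t: "t \<in> {0..1}"
    have pos: "0 < 1 - t + t * x" using psi_denominator_pos[OF assms t] .
    have "(H has_real_derivative (x + 1) * ((1 - t) / (1 - t + t * x)) - 1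
              + (x - x^2) * (t * (1 - t) / (1 - t + t * x)^2)) (at t within {0..1})"
      unfolding H_def
      by (insert pos, (rule derivative_eq_intros refl | simp)+)
        (simp add: divide_simps power2_eq_square, simp add: algebra_simps)
    then show "(H has_vector_derivative (x + 1) * ((1 - t) / (1 - t + t * x)) - 1
              + (x - x^2) * (t * (1 - t) / (1 - t + t * x)^2)) (at t within {0..1})"
      by (simp add: has_real_derivative_iff_has_vector_derivative)
  qed simp
  moreover have "((\<lambda>t. (x + 1) * ((1 - t) / (1 - t + t * x)) - 1
              + (x - x^2) * (t * (1 - t) / (1 - t + t * x)^2))
         has_integral (x + 1) * psi x - 1 + (x - x^2) * - psi_slope x) {0..1}"
    using assms has_integral_const_real[of "1::real" 0 1]
    by (intro has_integral_add has_integral_diff has_integral_mult_right has_integral_psi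
        has_integral_psi_slope) auto
  ultimately have "H 1 - H 0 = (x + 1) * psi x - 1 + (x - x^2) * - psi_slope x"
    by (rule has_integral_unique)
  then show ?thesis by (simp add: H_def algebra_simps)
qed

lemma psi_tangent_le_scaled:
  assumes "0 < D" "0 \<le> N" "0 \<le> S"
  shows "N * psi D + psi_slope D * (S - N * D) \<le> N * psi (S / N)"
proof (cases "N = 0")
  case True
  then show ?thesis using psi_slope_nonpos[OF assms(1)] assms(3) by (simp add: mult_nonpos_nonneg)
next
  case False
  then have "N * (psi D + (S / N - D) * psi_slope D) \<le> N * psi (S / N)"
    using assms by (intro mult_left_mono psi_tangent_le) auto
  then show ?thesis using False by (simp add: algebra_simps)
qed

section \<open>Shearer's bound for triangle-free graphs\<close>

definition arcs :: "('a \<Rightarrow> 'a \<Rightarrow> bool) \<Rightarrow> 'a set \<Rightarrow> ('a \<times> 'a) set" where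
  "arcs adj V = {(u, v). u \<in> V \<and> v \<in> V \<and> adj u v}"

definition nbhd :: "('a \<Rightarrow> 'a \<Rightarrow> bool) \<Rightarrow> 'a set \<Rightarrow> 'a \<Rightarrow> 'a set" where
  "nbhd adj V x = {y \<in> V. adj x y}"

lemma arcs_eq_Sigma_nbhd: "arcs adj V = Sigma V (nbhd adj V)"
  by (auto simp: arcs_def nbhd_def)

lemma finite_arcs: "finite V \<Longrightarrow> finite (arcs adj V)"
  by (simp add: arcs_eq_Sigma_nbhd nbhd_def)

lemma card_arcs_eq_sum_degree:
  "finite V \<Longrightarrow> card (arcs adj V) = (\<Sum>x\<in>V. card (nbhd adj V x))"
  by (simp add: arcs_eq_Sigma_nbhd nbhd_def card_SigmaI)

lemma exists_le_of_sum_le: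
  fixes f g :: "'a \<Rightarrow> real"
  assumes "finite A" "A \<noteq> {}" "sum f A \<le> sum g A"
  shows "\<exists>x\<in>A. f x \<le> g x"
  using sum_strict_mono[OF assms(1,2), of g f] assms(3) by force

text \<open>Deleting the closed neighbourhood of x removes deg x + 1 vertices and at least
  2 (sum of the degrees of the neighbours of x) arcs, so by the supporting line of psi at the
  average degree D the bound N psi(D) drops by at most this weight, while x itself can be added
  to the independent set.\<close>

definition shearer_weight :: "('a \<Rightarrow> 'a \<Rightarrow> bool) \<Rightarrow> 'a set \<Rightarrow> real \<Rightarrow> 'a \<Rightarrow> real" where
  "shearer_weight adj V D x =
     (real (card (nbhd adj V x)) + 1) * psi D
     + psi_slope D * (2 * (\<Sum>y\<in>nbhd adj V x. real (card (nbhd adj V y)))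
                      - (real (card (nbhd adj V x)) + 1) * D)"

locale triangle_free_adj =
  fixes adj :: "'a \<Rightarrow> 'a \<Rightarrow> bool"
  assumes adj_sym: "adj x y \<Longrightarrow> adj y x"
    and adj_irrefl: "\<not> adj x x"
    and no_triangle: "adj x y \<Longrightarrow> adj y z \<Longrightarrow> adj x z \<Longrightarrow> False"
begin

lemma sum_sum_nbhd:
  fixes f :: "'a \<Rightarrow> real"
  assumes "finite V"
  shows "(\<Sum>x\<in>V. \<Sum>y\<in>nbhd adj V x. f y) = (\<Sum>y\<in>V. card (nbhd adj V y) * f y)"
proof -
  have "(\<Sum>x\<in>V. \<Sum>y\<in>nbhd adj V x. f y) = (\<Sum>y\<in>V. \<Sum>x\<in>{x \<in> V. adj x y}. f y)"
    unfolding nbhd_def by (rule sum.swap_restrict[OF assms assms])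
  also have "\<dots> = (\<Sum>y\<in>V. card (nbhd adj V y) * f y)"
    using adj_sym by (intro sum.cong refl) (auto simp: nbhd_def intro!: arg_cong[where f = card])
  finally show ?thesis .
qed

lemma card_arcs_delete_closed_nbhd:
  assumes "finite V" "x \<in> V"
  shows "card (arcs adj (V - insert x (nbhd adj V x)))
           + 2 * (\<Sum>y\<in>nbhd adj V x. card (nbhd adj V y)) \<le> card (arcs adj V)"
proof -
  define rest where "rest = arcs adj (V - insert x (nbhd adj V x))"
  define out where "out = Sigma (nbhd adj V x) (nbhd adj V)"
  define into where "into = prod.swap ` out"
  have "finite out" "finite rest"
    using assms(1) by (simp_all add: out_def nbhd_def rest_def finite_arcs)
  have "out \<inter> into = {}"
  proof (intro equals0I)
    fix p assume "p \<in> out \<inter> into"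
    then obtain u v where "adj x u" "adj u v" "adj x v"
      by (auto simp: out_def into_def nbhd_def)
    then show False by (rule no_triangle)
  qed
  moreover have "rest \<inter> out = {}" "rest \<inter> into = {}"
    by (auto simp: rest_def out_def into_def arcs_def nbhd_def)
  ultimately have "card rest + card out + card into = card (rest \<union> out \<union> into)"
    using \<open>finite out\<close> \<open>finite rest\<close> by (simp add: card_Un_disjoint Int_Un_distrib2 into_def)
  also have "\<dots> \<le> card (arcs adj V)"
    using adj_sym by (intro card_mono finite_arcs assms(1))
      (auto simp: rest_def arcs_def out_def into_def nbhd_def)
  finally show ?thesis
    using assms(1) by (simp add: rest_def out_def into_def card_image nbhd_def card_SigmaI)
qed

text \<open>By psi_ode the weights sum to N + 2 psi_slope D (sum of d(y)^2 - N D^2), which is at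
  most N by Cauchy-Schwarz.\<close>

lemma shearer_vertex_choice:
  assumes "finite V" "arcs adj V \<noteq> {}"
  shows "\<exists>x\<in>V. shearer_weight adj V (card (arcs adj V) / card V) x \<le> 1"
proof -
  define N where "N = real (card V)"
  define D where "D = real (card (arcs adj V)) / card V"
  define d where "d y = real (card (nbhd adj V y))" for y
  have "V \<noteq> {}" using assms(2) by (auto simp: arcs_def)
  then have "0 < N" using assms(1) by (simp add: N_def card_gt_0_iff)
  have "0 < D"
    using assms(1,2) \<open>V \<noteq> {}\<close> by (simp add: D_def card_gt_0_iff finite_arcs)
  have sum_d: "(\<Sum>y\<in>V. d y) = N * D"
    using \<open>0 < N\<close> by (simp add: d_def D_def N_def card_arcs_eq_sum_degree assms(1))
  have "(N * D)^2 \<le> (\<Sum>y\<in>V. (d y)^2) * N"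
    using sum_squared_le_sum_of_squares[of d V] by (simp add: sum_d N_def)
  then have cauchy_schwarz: "N * D^2 \<le> (\<Sum>y\<in>V. (d y)^2)"
    using \<open>0 < N\<close> by (simp add: power2_eq_square field_simps)
  have sum_1: "(\<Sum>x\<in>V. 1) = N" by (simp add: N_def)
  have sum_sum_d: "(\<Sum>x\<in>V. \<Sum>y\<in>nbhd adj V x. d y) = (\<Sum>y\<in>V. (d y)^2)"
    using sum_sum_nbhd[OF assms(1)] by (simp add: d_def power2_eq_square)
  have "(\<Sum>x\<in>V. shearer_weight adj V D x)
      = (\<Sum>x\<in>V. psi D * (d x + 1) + 2 * psi_slope D * (\<Sum>y\<in>nbhd adj V x. d y)
                  - psi_slope D * D * (d x + 1))"
    by (simp add: shearer_weight_def d_def algebra_simps)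
  also have "\<dots> = psi D * (N * D + N) + 2 * psi_slope D * (\<Sum>y\<in>V. (d y)^2)
                  - psi_slope D * D * (N * D + N)"
    by (simp only: sum.distrib sum_subtractf sum_distrib_left [symmetric] sum_d sum_1 sum_sum_d)
  also have "\<dots> = N + 2 * psi_slope D * ((\<Sum>y\<in>V. (d y)^2) - N * D^2)"
    using arg_cong[where f = "\<lambda>z. N * z", OF psi_ode[OF \<open>0 < D\<close>]]
    by (simp add: algebra_simps power2_eq_square)
  also have "\<dots> \<le> (\<Sum>x\<in>V. 1)"
    using psi_slope_nonpos[OF \<open>0 < D\<close>] cauchy_schwarz
    by (simp add: N_def mult_nonpos_nonneg)
  finally show ?thesis
    using exists_le_of_sum_le[OF assms(1) \<open>V \<noteq> {}\<close>] by (simp add: D_def)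
qed

lemma psi_bound_delete_closed_nbhd:
  fixes D :: real
  assumes "finite V" "x \<in> V" "0 < D" "card (arcs adj V) = card V * D"
    and "shearer_weight adj V D x \<le> 1"
  defines "V' \<equiv> V - insert x (nbhd adj V x)"
  shows "card V * psi D \<le> 1 + card V' * psi (card (arcs adj V') / card V')"
proof -
  define N where "N = real (card V)"
  define s where "s = (\<Sum>y\<in>nbhd adj V x. real (card (nbhd adj V y)))"
  have closed_nbhd: "insert x (nbhd adj V x) \<subseteq> V"
    using assms(2) by (auto simp: nbhd_def)
  have card_closed_nbhd: "card (insert x (nbhd adj V x)) = card (nbhd adj V x) + 1"
    using assms(1) adj_irrefl by (simp add: nbhd_def)
  have card_V': "real (card V') = N - 1 - card (nbhd adj V x)"
    using card_mono[OF assms(1) closed_nbhd] card_closed_nbhd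
      card_Diff_subset[OF finite_subset[OF closed_nbhd assms(1)] closed_nbhd]
    by (simp add: V'_def N_def of_nat_diff)
  have "real (card (arcs adj V')) \<le> N * D - 2 * s"
    using card_arcs_delete_closed_nbhd[OF assms(1,2)] assms(4)
    unfolding V'_def s_def N_def by (simp flip: of_nat_sum)
  then have "psi_slope D * (N * D - 2 * s - card V' * D)
               \<le> psi_slope D * (card (arcs adj V') - card V' * D)"
    using psi_slope_nonpos[OF \<open>0 < D\<close>] by (intro mult_left_mono_neg) auto
  moreover have "N * psi D \<le> 1 + card V' * psi D + psi_slope D * (N * D - 2 * s - card V' * D)"
    using assms(5) unfolding card_V' shearer_weight_def s_def [symmetric]
    by (simp add: algebra_simps)
  ultimately have "N * psi D \<le> 1 + card V' * psi D + psi_slope D * (card (arcs adj V') - card V' * D)"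
    by linarith
  also have "\<dots> \<le> 1 + card V' * psi (card (arcs adj V') / card V')"
    using psi_tangent_le_scaled[OF \<open>0 < D\<close>, of "card V'" "card (arcs adj V')"] by simp
  finally show ?thesis by (simp add: N_def)
qed

theorem shearer_independent_set:
  assumes "finite V"
  shows "\<exists>I\<subseteq>V. (\<forall>x\<in>I. \<forall>y\<in>I. \<not> adj x y)
                \<and> card V * psi (card (arcs adj V) / card V) \<le> card I"
  using assms
proof (induction V rule: finite_psubset_induct)
  case (psubset V)
  show ?case
  proof (cases "arcs adj V = {}")
    case True
    then have "\<forall>x\<in>V. \<forall>y\<in>V. \<not> adj x y" by (auto simp: arcs_def)
    with True show ?thesis by (intro exI[of _ V]) (simp add: psi_def)
  next
    case False
    define D where "D = real (card (arcs adj V)) / card V"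
    have "V \<noteq> {}" using False by (auto simp: arcs_def)
    then have "0 < D"
      using psubset.hyps False by (simp add: D_def card_gt_0_iff finite_arcs)
    have card_arcs: "card (arcs adj V) = card V * D"
      using psubset.hyps \<open>V \<noteq> {}\<close> by (simp add: D_def)
    obtain x where "x \<in> V" and "shearer_weight adj V D x \<le> 1"
      using shearer_vertex_choice[OF psubset.hyps False, folded D_def] by blast
    define V' where "V' = V - insert x (nbhd adj V x)"
    have "V' \<subset> V" using \<open>x \<in> V\<close> by (auto simp: V'_def)
    then obtain I' where "I' \<subseteq> V'" and indep': "\<forall>u\<in>I'. \<forall>v\<in>I'. \<not> adj u v"
      and card_I': "card V' * psi (card (arcs adj V') / card V') \<le> card I'"
      by (elim psubset.IH [THEN exE]) auto
    have "x \<notin> I'" using \<open>I' \<subseteq> V'\<close> by (auto simp: V'_def)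
    moreover have "finite I'"
      using \<open>I' \<subseteq> V'\<close> \<open>V' \<subset> V\<close> psubset.hyps by (meson finite_subset psubset_imp_subset)
    ultimately have "card V * psi D \<le> card (insert x I')"
      using psi_bound_delete_closed_nbhd[OF psubset.hyps \<open>x \<in> V\<close> \<open>0 < D\<close> card_arcs
          \<open>shearer_weight adj V D x \<le> 1\<close>] card_I'
      by (simp add: V'_def)
    moreover have "\<forall>u\<in>insert x I'. \<forall>v\<in>insert x I'. \<not> adj u v"
      using indep' \<open>I' \<subseteq> V'\<close> by (auto simp: V'_def nbhd_def adj_irrefl dest: adj_sym)
    moreover have "insert x I' \<subseteq> V"
      using \<open>x \<in> V\<close> \<open>I' \<subseteq> V'\<close> by (auto simp: V'_def)
    ultimately show ?thesis
      unfolding D_def by blast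
  qed
qed

end

section \<open>Graphs on [n] and the bound by the independence number\<close>

lemma graph_on_edgeD:
  assumes "graph_on n G" "{u, v} \<in> G"
  shows "u \<noteq> v" "u \<in> {1..n}" "v \<in> {1..n}"
proof -
  obtain a b where "{u, v} = {a, b}" "a \<noteq> b" "a \<in> {1..n}" "b \<in> {1..n}"
    using assms unfolding graph_on_def by blast
  then show "u \<noteq> v" "u \<in> {1..n}" "v \<in> {1..n}" by (auto simp: doubleton_eq_iff)
qed

lemma graph_on_subset_Pow: "graph_on n G \<Longrightarrow> G \<subseteq> Pow {1..n}"
  unfolding graph_on_def by auto

lemma finite_graph_on: "graph_on n G \<Longrightarrow> finite G"
  by (meson finite_Pow_iff finite_atLeastAtMost finite_subset graph_on_subset_Pow)

lemma card_ordered_edges: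
  assumes "graph_on n G"
  shows "card {(u, v). {u, v} \<in> G} = 2 * card G"
proof -
  have edge: "finite {(u, v). {u, v} = e} \<and> card {(u, v). {u, v} = e} = 2" if "e \<in> G" for e
  proof -
    obtain a b where "e = {a, b}" "a \<noteq> b"
      using assms \<open>e \<in> G\<close> unfolding graph_on_def by blast
    then have "{(u, v). {u, v} = e} = {(a, b), (b, a)}" by (auto simp: doubleton_eq_iff)
    then show ?thesis using \<open>a \<noteq> b\<close> by simp
  qed
  have "{(u, v). {u, v} \<in> G} = (\<Union>e\<in>G. {(u, v). {u, v} = e})" by auto
  also have "card \<dots> = (\<Sum>e\<in>G. card {(u, v). {u, v} = e})"
    using finite_graph_on[OF assms] edge by (intro card_UN_disjoint) auto
  also have "\<dots> = (\<Sum>e\<in>G. 2)" using edge by simp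
  finally show ?thesis by simp
qed

lemma sum_degree_eq_twice_card:
  assumes "graph_on n G"
  shows "(\<Sum>v\<in>{1..n}. degree G v) = 2 * card G"
proof -
  have "{(u, v). {u, v} \<in> G} = Sigma {1..n} (\<lambda>u. {v. {v, u} \<in> G})"
    by (auto simp: insert_commute dest: graph_on_edgeD(2)[OF assms])
  moreover have "finite {v. {v, u} \<in> G}" for u
    by (rule finite_subset[of _ "{1..n}"]) (auto dest: graph_on_edgeD(2)[OF assms])
  ultimately show ?thesis
    using card_ordered_edges[OF assms] by (simp add: card_SigmaI degree_def)
qed

lemma finite_ex_P_K3_candidates:
  "finite {num_edges G | G. graph_on n G \<and> triangle_free G \<and> P \<subseteq> G}"
  by (rule finite_subset[of _ "card ` Pow (Pow {1..n})"])
    (auto simp: num_edges_def dest: graph_on_subset_Pow)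

lemma card_le_ex_P_K3:
  "graph_on n G \<Longrightarrow> triangle_free G \<Longrightarrow> P \<subseteq> G \<Longrightarrow> card G \<le> ex_P_K3 n P"
  unfolding ex_P_K3_def by (rule Max_ge[OF finite_ex_P_K3_candidates]) (auto simp: num_edges_def)

lemma ex_P_K3_attained:
  assumes "graph_on n P" "triangle_free P"
  obtains G where "graph_on n G" "triangle_free G" "P \<subseteq> G" "ex_P_K3 n P = card G"
proof -
  have "ex_P_K3 n P \<in> {num_edges G | G. graph_on n G \<and> triangle_free G \<and> P \<subseteq> G}"
    unfolding ex_P_K3_def using assms by (intro Max_in finite_ex_P_K3_candidates) auto
  then show ?thesis using that by (auto simp: num_edges_def)
qed

lemma card_le_indep_num:
  assumes "independent_set n P S"
  shows "card S \<le> indep_num n P"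
proof -
  have "finite {card S | S. independent_set n P S}"
    by (rule finite_subset[of _ "card ` Pow {1..n}"]) (auto simp: independent_set_def)
  then show ?thesis unfolding indep_num_def using assms by (intro Max_ge) auto
qed

lemma independent_set_nbhd:
  assumes "graph_on n G" "triangle_free G" "P \<subseteq> G"
  shows "independent_set n P {u. {u, v} \<in> G}"
  unfolding independent_set_def
proof (intro conjI ballI)
  show "{u. {u, v} \<in> G} \<subseteq> {1..n}" by (auto dest: graph_on_edgeD(2)[OF assms(1)])
  fix a b assume "a \<in> {u. {u, v} \<in> G}" "b \<in> {u. {u, v} \<in> G}"
  then show "{a, b} \<notin> P"
    using assms(2,3) unfolding triangle_free_def by (auto simp: insert_commute)
qed

lemma twice_card_le_indep_num:
  assumes "graph_on n G" "triangle_free G" "P \<subseteq> G"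
  shows "2 * card G \<le> n * indep_num n P"
proof -
  have "2 * card G = (\<Sum>v\<in>{1..n}. degree G v)"
    using sum_degree_eq_twice_card[OF assms(1)] ..
  also have "\<dots> \<le> (\<Sum>v\<in>{1..n}. indep_num n P)"
    unfolding degree_def by (intro sum_mono card_le_indep_num independent_set_nbhd assms)
  finally show ?thesis by simp
qed

theorem ex_P_K3_le_indep_num:
  assumes "graph_on n P" "triangle_free P"
  shows "real (ex_P_K3 n P) \<le> real n * real (indep_num n P) / 2"
proof -
  obtain G where "graph_on n G" "triangle_free G" "P \<subseteq> G" "ex_P_K3 n P = card G"
    using ex_P_K3_attained[OF assms] .
  then have "2 * ex_P_K3 n P \<le> n * indep_num n P"
    using twice_card_le_indep_num by simp
  then show ?thesis by (simp flip: of_nat_mult)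
qed

section \<open>Extending P by a conflict-free set of candidate edges\<close>

definition candidate_pairs :: "nat \<Rightarrow> nat set set \<Rightarrow> (nat \<times> nat) set" where
  "candidate_pairs n P = {(a, b). a \<in> {1..n div 2} \<and> b \<in> {n div 2<..n}
      \<and> {a, b} \<notin> P \<and> \<not> (\<exists>w. {a, w} \<in> P \<and> {w, b} \<in> P)}"

text \<open>A pair (a, b) stands for the edge {a, b}; two candidate edges are adjacent when they share
  an endpoint and their other endpoints form an edge of P, i.e. when adding both would close a
  triangle.\<close>

fun pair_adj :: "nat set set \<Rightarrow> nat \<times> nat \<Rightarrow> nat \<times> nat \<Rightarrow> bool" where
  "pair_adj P (a, b) (a', b') \<longleftrightarrow> (a = a' \<and> {b, b'} \<in> P) \<or> (b = b' \<and> {a, a'} \<in> P)"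

lemma triangle_free_adj_pair_adj:
  assumes "graph_on n P" "triangle_free P"
  shows "triangle_free_adj (pair_adj P)"
proof
  have no_loop: "{u} \<notin> P" for u
    using graph_on_edgeD(1)[OF assms(1), of u u] by auto
  have no_triangle: "{a, b} \<in> P \<Longrightarrow> {b, c} \<in> P \<Longrightarrow> {a, c} \<in> P \<Longrightarrow> False" for a b c
    using assms(2) unfolding triangle_free_def by blast
  fix p q r :: "nat \<times> nat"
  show "pair_adj P p q \<Longrightarrow> pair_adj P q p"
    by (cases p; cases q) (auto simp: insert_commute)
  show "\<not> pair_adj P p p" by (cases p) (simp add: no_loop)
  show "pair_adj P p q \<Longrightarrow> pair_adj P q r \<Longrightarrow> pair_adj P p r \<Longrightarrow> False"
    using no_loop no_triangle[of "fst p" "fst q" "fst r"] no_triangle[of "snd p" "snd q" "snd r"]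
    by (cases p; cases q; cases r) auto
qed

lemma triangle_free_add_candidates:
  assumes "triangle_free P" "I \<subseteq> candidate_pairs n P"
    and indep: "\<forall>p\<in>I. \<forall>q\<in>I. \<not> pair_adj P p q"
  shows "triangle_free (P \<union> (\<lambda>(a, b). {a, b}) ` I)"
proof -
  define m where "m = n div 2"
  define F where "F = (\<lambda>(a, b). {a, b}) ` I"
  have F_pair: "\<exists>a b. (a, b) \<in> I \<and> e = {a, b} \<and> a \<le> m \<and> m < b" if "e \<in> F" for e
    using that assms(2) by (fastforce simp: F_def candidate_pairs_def m_def)
  have crossing: "(u \<le> m) \<noteq> (v \<le> m)" if "{u, v} \<in> F" for u v
    using F_pair[OF that] by (auto simp: doubleton_eq_iff)
  have one_new: False if xy: "{x, y} \<in> F" and P_edges: "{x, z} \<in> P" "{y, z} \<in> P" for x y z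
  proof -
    obtain a b where "(a, b) \<in> I" "{x, y} = {a, b}" using F_pair[OF xy] by blast
    moreover have "\<not> (\<exists>w. {a, w} \<in> P \<and> {w, b} \<in> P)"
      using \<open>(a, b) \<in> I\<close> assms(2) by (auto simp: candidate_pairs_def)
    ultimately show False using P_edges by (auto simp: doubleton_eq_iff insert_commute)
  qed
  have two_new: False if xy: "{x, y} \<in> F" and yz: "{y, z} \<in> F" and xz: "{x, z} \<in> P"
    for x y z
  proof -
    obtain a b where ab: "(a, b) \<in> I" "{x, y} = {a, b}" "a \<le> m" "m < b"
      using F_pair[OF xy] by blast
    obtain a' b' where a'b': "(a', b') \<in> I" "{y, z} = {a', b'}" "a' \<le> m" "m < b'"
      using F_pair[OF yz] by blast
    have "pair_adj P (a, b) (a', b')"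
      using ab a'b' xz by (cases "y \<le> m") (auto simp: doubleton_eq_iff)
    then show False using indep ab(1) a'b'(1) by blast
  qed
  have no_triangle: "{a, b} \<in> P \<Longrightarrow> {b, c} \<in> P \<Longrightarrow> {a, c} \<in> P \<Longrightarrow> False" for a b c
    using assms(1) unfolding triangle_free_def by blast
  show ?thesis
    unfolding triangle_free_def F_def [symmetric]
  proof (intro notI, elim exE conjE)
    fix x y z assume "{x, y} \<in> P \<union> F" "{y, z} \<in> P \<union> F" "{x, z} \<in> P \<union> F"
    then show False
      using no_triangle[of x y z] one_new[of x y z] one_new[of y z x] one_new[of x z y]
        two_new[of x y z] two_new[of y x z] two_new[of x z y]
        crossing[of x y] crossing[of y z] crossing[of x z]
      by (auto simp: insert_commute)
  qed
qed

lemma card_le_ex_P_K3_of_independent_pairs: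
  assumes "graph_on n P" "triangle_free P" "I \<subseteq> candidate_pairs n P"
    and "\<forall>p\<in>I. \<forall>q\<in>I. \<not> pair_adj P p q"
  shows "card I \<le> ex_P_K3 n P"
proof -
  define G where "G = P \<union> (\<lambda>(a, b). {a, b}) ` I"
  have G: "graph_on n G"
    using assms(1,3) unfolding graph_on_def G_def candidate_pairs_def by fastforce
  have "inj_on (\<lambda>(a, b). {a, b}) I"
    by (auto simp: inj_on_def doubleton_eq_iff candidate_pairs_def dest!: subsetD[OF assms(3)])
  then have "card I = card ((\<lambda>(a, b). {a, b}) ` I)" by (simp add: card_image)
  also have "\<dots> \<le> card G"
    using finite_graph_on[OF G] by (intro card_mono) (auto simp: G_def)
  also have "\<dots> \<le> ex_P_K3 n P"
    using G triangle_free_add_candidates[OF assms(2-4)] by (intro card_le_ex_P_K3) (auto simp: G_def)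
  finally show ?thesis .
qed

lemma card_halves_product: "card ({1..n div 2} \<times> {n div 2<..n}) = n^2 div 4"
proof (cases "even n")
  case True
  then obtain k where "n = 2 * k" by blast
  then show ?thesis by (simp add: card_cartesian_product power2_eq_square)
next
  case False
  then obtain k where n: "n = 2 * k + 1" using oddE by blast
  then have "n^2 = 4 * (k * k + k) + 1" by (simp add: power2_eq_square algebra_simps)
  then show ?thesis by (simp add: n card_cartesian_product algebra_simps)
qed

lemma card_adjacent_pairs_le:
  assumes "graph_on n P"
  shows "card {(a, b). a < b \<and> {a, b} \<in> P} \<le> card P"
  by (rule card_inj_on_le[of "\<lambda>(a, b). {a, b}"])
    (auto simp: inj_on_def doubleton_eq_iff finite_graph_on[OF assms])

lemma card_pairs_with_common_nbr_le:
  assumes "graph_on n P"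
  shows "card {(a, b). a < b \<and> (\<exists>w. {a, w} \<in> P \<and> {w, b} \<in> P)} \<le> num_S2 n P"
proof -
  define nbr where "nbr w = {u. {u, w} \<in> P}" for w
  have finite_nbr: "finite (nbr w)" for w
    by (rule finite_subset[of _ "{1..n}"]) (auto simp: nbr_def dest: graph_on_edgeD(2)[OF assms])
  define cherries where "cherries = Sigma {1..n} (\<lambda>w. {S. S \<subseteq> nbr w \<and> card S = 2})"
  have "finite cherries"
    unfolding cherries_def using finite_nbr by (intro finite_SigmaI) auto
  have "card cherries = (\<Sum>w\<in>{1..n}. card (nbr w) choose 2)"
    unfolding cherries_def using finite_nbr by (simp add: card_SigmaI n_subsets)
  also have "\<dots> = num_S2 n P" by (simp add: num_S2_def degree_def nbr_def)
  finally have card_cherries: "card cherries = num_S2 n P" .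
  define centre where "centre a b = (SOME w. {a, w} \<in> P \<and> {w, b} \<in> P)" for a b
  have "card {(a, b). a < b \<and> (\<exists>w. {a, w} \<in> P \<and> {w, b} \<in> P)} \<le> card cherries"
  proof (rule card_inj_on_le[OF _ _ \<open>finite cherries\<close>])
    show "inj_on (\<lambda>(a, b). (centre a b, {a, b})) {(a, b). a < b \<and> (\<exists>w. {a, w} \<in> P \<and> {w, b} \<in> P)}"
      by (auto simp: inj_on_def doubleton_eq_iff)
    show "(\<lambda>(a, b). (centre a b, {a, b})) ` {(a, b). a < b \<and> (\<exists>w. {a, w} \<in> P \<and> {w, b} \<in> P)}
            \<subseteq> cherries"
    proof clarify
      fix a b w assume "a < b" "{a, w} \<in> P" "{w, b} \<in> P"
      then have "{a, centre a b} \<in> P" "{centre a b, b} \<in> P"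
        unfolding centre_def by (metis (mono_tags, lifting) someI)+
      then show "(centre a b, {a, b}) \<in> cherries"
        using \<open>a < b\<close> graph_on_edgeD(2)[OF assms]
        by (auto simp: cherries_def nbr_def insert_commute)
    qed
  qed
  then show ?thesis using card_cherries by simp
qed

lemma card_candidate_pairs_ge:
  assumes "graph_on n P"
  shows "n^2 div 4 \<le> card (candidate_pairs n P) + card P + num_S2 n P"
proof -
  define adjacent where "adjacent = {(a, b). a < b \<and> {a, b} \<in> P}"
  define common where "common = {(a, b). a < b \<and> (\<exists>w. {a, w} \<in> P \<and> {w, b} \<in> P)}"
  have "finite (candidate_pairs n P)"
    by (rule finite_subset[of _ "{1..n div 2} \<times> {n div 2<..n}"]) (auto simp: candidate_pairs_def)
  moreover have "finite adjacent"
    by (rule finite_subset[of _ "{1..n} \<times> {1..n}"])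
      (auto simp: adjacent_def dest: graph_on_edgeD(2,3)[OF assms])
  moreover have "finite common"
    by (rule finite_subset[of _ "{1..n} \<times> {1..n}"])
      (auto simp: common_def dest: graph_on_edgeD(2,3)[OF assms])
  ultimately have "card ({1..n div 2} \<times> {n div 2<..n})
                     \<le> card (candidate_pairs n P \<union> adjacent \<union> common)"
    by (intro card_mono) (auto simp: candidate_pairs_def adjacent_def common_def)
  also have "\<dots> \<le> card (candidate_pairs n P) + card adjacent + card common"
    by (meson add_le_mono card_Un_le le_trans order_refl)
  also have "\<dots> \<le> card (candidate_pairs n P) + card P + num_S2 n P"
    using card_adjacent_pairs_le[OF assms] card_pairs_with_common_nbr_le[OF assms]
    by (simp add: adjacent_def common_def)
  finally show ?thesis by (simp only: card_halves_product)
qed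

lemma card_arcs_pair_adj_le:
  assumes "graph_on n P" "V \<subseteq> {1..m} \<times> {m<..n}"
  shows "card (arcs (pair_adj P) V) \<le> 2 * card P * (n - 2)"
proof -
  define E where "E = {(u, v). {u, v} \<in> P}"
  define target where "target = Sigma E (\<lambda>(u, v). {1..n} - {u, v})"
  have "finite E"
    by (rule finite_subset[of _ "{1..n} \<times> {1..n}"])
      (auto simp: E_def dest: graph_on_edgeD(2,3)[OF assms(1)])
  have "card ({1..n} - {u, v}) = n - 2" if "(u, v) \<in> E" for u v
    using that graph_on_edgeD[OF assms(1)] by (simp add: E_def card_Diff_subset)
  then have "card target = card E * (n - 2)"
    using \<open>finite E\<close> by (simp add: target_def card_SigmaI split_beta)
  also have "\<dots> = 2 * card P * (n - 2)"
    using card_ordered_edges[OF assms(1)] by (simp add: E_def)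
  finally have card_target: "card target = 2 * card P * (n - 2)" .
  \<comment> \<open>an arc between candidate edges meeting in c, with other endpoints u v adjacent in P,
    is coded by ((u, v), c)\<close>
  define code :: "(nat \<times> nat) \<times> nat \<times> nat \<Rightarrow> (nat \<times> nat) \<times> nat" where
    "code = (\<lambda>((a, b), (a', b')). if a = a' then ((b, b'), a) else ((a, a'), b))"
  have arc: "a \<le> m \<and> m < b \<and> a' \<le> m \<and> m < b' \<and> 1 \<le> a \<and> 1 \<le> a' \<and> b \<le> n \<and> b' \<le> n
              \<and> ((a = a' \<and> {b, b'} \<in> P) \<or> (a \<noteq> a' \<and> b = b' \<and> {a, a'} \<in> P))"
    if "((a, b), (a', b')) \<in> arcs (pair_adj P) V" for a b a' b'
    using that assms(2) graph_on_edgeD(1)[OF assms(1)] by (auto simp: arcs_def)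
  have "inj_on code (arcs (pair_adj P) V)"
  proof (rule inj_onI)
    fix p q assume "p \<in> arcs (pair_adj P) V" "q \<in> arcs (pair_adj P) V" "code p = code q"
    then show "p = q"
      by (cases p, cases q) (auto simp: code_def split: if_splits dest!: arc)
  qed
  moreover have "code ` arcs (pair_adj P) V \<subseteq> target"
    by (auto simp: code_def target_def E_def dest!: arc)
  ultimately have "card (arcs (pair_adj P) V) \<le> card target"
    using \<open>finite E\<close> by (intro card_inj_on_le) (auto simp: target_def)
  then show ?thesis using card_target by simp
qed

lemma candidates_psi_le_ex_P_K3:
  assumes "graph_on n P" "triangle_free P"
  defines "C \<equiv> candidate_pairs n P"
  shows "card C * psi (card (arcs (pair_adj P) C) / card C) \<le> ex_P_K3 n P"
proof -
  interpret triangle_free_adj "pair_adj P"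
    using assms(1,2) by (rule triangle_free_adj_pair_adj)
  have "finite C"
    by (rule finite_subset[of _ "{1..n div 2} \<times> {n div 2<..n}"]) (auto simp: C_def candidate_pairs_def)
  then obtain I where "I \<subseteq> C" "\<forall>p\<in>I. \<forall>q\<in>I. \<not> pair_adj P p q"
    and "card C * psi (card (arcs (pair_adj P) C) / card C) \<le> card I"
    by (elim shearer_independent_set [THEN exE]) auto
  moreover have "card I \<le> ex_P_K3 n P"
    using card_le_ex_P_K3_of_independent_pairs[OF assms(1,2)] \<open>I \<subseteq> C\<close>
      \<open>\<forall>p\<in>I. \<forall>q\<in>I. \<not> pair_adj P p q\<close> by (simp add: C_def)
  ultimately show ?thesis by linarith
qed

theorem ex_P_K3_ge_psi:
  assumes "graph_on n P" "triangle_free P" "num_edges P + num_S2 n P < n^2 div 4"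
  shows "(real (n^2 div 4) - real (num_edges P) - real (num_S2 n P))
           * psi (gamma_P n P * avg_degree n P) \<le> real (ex_P_K3 n P)"
proof -
  define C where "C = candidate_pairs n P"
  define M where "M = real (n^2 div 4) - real (num_edges P) - real (num_S2 n P)"
  define x where "x = 2 * real (card P) * (real n - 2) / M"
  have "2 \<le> n"
  proof (rule ccontr)
    assume "\<not> 2 \<le> n"
    then have "n = 0 \<or> n = 1" by arith
    then have "n^2 div 4 = 0" by auto
    then show False using assms(3) by simp
  qed
  have "0 < M" using assms(3) by (simp add: M_def)
  have "M \<le> card C"
    using card_candidate_pairs_ge[OF assms(1)] by (simp add: M_def C_def num_edges_def)
  have "gamma_P n P * avg_degree n P = x"
    using \<open>2 \<le> n\<close> by (simp add: gamma_P_def avg_degree_def M_def x_def num_edges_def)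
  have "card (arcs (pair_adj P) C) \<le> 2 * card P * (n - 2)"
    using assms(1) by (rule card_arcs_pair_adj_le) (auto simp: C_def candidate_pairs_def)
  then have "real (card (arcs (pair_adj P) C)) \<le> real (2 * card P * (n - 2))"
    by (simp only: of_nat_le_iff)
  also have "\<dots> = 2 * real (card P) * (real n - 2)"
    using \<open>2 \<le> n\<close> by (simp add: of_nat_diff)
  finally have "card (arcs (pair_adj P) C) / card C \<le> 2 * real (card P) * (real n - 2) / card C"
    by (rule divide_right_mono) simp
  also have "\<dots> \<le> x"
    unfolding x_def using \<open>0 < M\<close> \<open>M \<le> card C\<close> \<open>2 \<le> n\<close> by (intro divide_left_mono) auto
  finally have ratio: "card (arcs (pair_adj P) C) / card C \<le> x" .
  have "M * psi x \<le> card C * psi x"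
    using \<open>M \<le> card C\<close> psi_nonneg \<open>0 < M\<close> \<open>2 \<le> n\<close> by (intro mult_right_mono) (auto simp: x_def)
  also have "\<dots> \<le> card C * psi (card (arcs (pair_adj P) C) / card C)"
    using ratio by (intro mult_left_mono psi_antimono) auto
  also have "\<dots> \<le> ex_P_K3 n P"
    using candidates_psi_le_ex_P_K3[OF assms(1,2)] by (simp add: C_def)
  finally show ?thesis
    unfolding M_def [symmetric] \<open>gamma_P n P * avg_degree n P = x\<close> .
qed

theorem theorem1p1:
  fixes n :: nat and P :: "nat set set"
  assumes "n \<ge> 1"
    and "graph_on n P"
    and "triangle_free P"
  shows "real (ex_P_K3 n P) \<le> real n * real (indep_num n P) / 2
    \<and> (num_edges P + num_S2 n P < n^2 div 4 \<longrightarrow>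
         real (ex_P_K3 n P) \<ge>
           (real (n^2 div 4) - real (num_edges P) - real (num_S2 n P))
             * psi (gamma_P n P * avg_degree n P))"
  using ex_P_K3_le_indep_num[OF assms(2,3)] ex_P_K3_ge_psi[OF assms(2,3)] by blast

end
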